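(* Let $A\in\mathbb{R}^{n\times n}$, $B\in\mathbb{R}^{n\times p}$ with $(A,B)$ controllable, let $P$ be a positive definite matrix such that for some $\epsilon>0$, $(x-y)^TP\{A(x-y)-P^{-1}BB^T(x-y)\}\le-\epsilon(x-y)^T(x-y)$ for all $x,y$. Let $L=(l_{ij})\in\mathbb{R}^{m\times m}$ be irreducible with $\mathrm{Rank}(L)=m-1$, $l_{ij}\ge0$ for $i\ne j$, $\sum_jl_{ij}=0$, let $\varepsilon>0$, and let $s(t)$ satisfy $\dot s(t)=As(t)$. Consider $$\frac{dx_1(t)}{dt}=Ax_1(t)+c\sum_{j=1}^ml_{1j}P^{-1}BB^Tx_j(t)-c\varepsilon(x_1(t)-s(t)),$$ $$\frac{dx_i(t)}{dt}=Ax_i(t)+c\sum_{j=1}^ml_{ij}P^{-1}BB^Tx_j(t),\qquad i=2,\dots,m.$$ Then for sufficiently large constant $c$ the system reaches consensus to the trajectory $s(t)$, i.e. $x_i(t)-s(t)\to0$ for all $i$. *)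

theory Defs
  imports "HOL-Analysis.Analysis"
begin

primrec matpow :: "real^'n^'n \<Rightarrow> nat \<Rightarrow> real^'n^'n" where
  "matpow A 0 = mat 1"
| "matpow A (Suc k) = A ** matpow A k"

text \<open>Kalman controllability: the controllability matrix [B, AB, ..., A^(n-1) B]
  has rank n, i.e. its columns span a space of dimension n.\<close>
definition controllable :: "real^'n^'n \<Rightarrow> real^'p^'n \<Rightarrow> bool" where
  "controllable A B \<longleftrightarrow>
     dim (span (\<Union>k<CARD('n). columns (matpow A k ** B))) = CARD('n)"

definition pos_def_matrix :: "real^'n^'n \<Rightarrow> bool" where
  "pos_def_matrix P \<longleftrightarrow> transpose P = P \<and> (\<forall>x. x \<noteq> 0 \<longrightarrow> x \<bullet> (P *v x) > 0)"

text \<open>Reducible matrix: the index set splits into a nonempty proper subset I and its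
  complement J with L_ij = 0 for all i in I, j in J (equivalently, L is permutation-similar
  to a block triangular matrix).\<close>
definition reducible_matrix :: "real^'m^'m \<Rightarrow> bool" where
  "reducible_matrix L \<longleftrightarrow>
     (\<exists>I. I \<noteq> {} \<and> I \<noteq> UNIV \<and> (\<forall>i\<in>I. \<forall>j. j \<notin> I \<longrightarrow> L $ i $ j = 0))"

definition irreducible_matrix :: "real^'m^'m \<Rightarrow> bool" where
  "irreducible_matrix L \<longleftrightarrow> \<not> reducible_matrix L"

end

theory Submission
  imports Defs
begin

(* Let \<xi> be the positive left null vector of L, which exists because L is an irreducible
  Metzler matrix with zero row sums, and let e_i = x_i - s be the errors. The weighted function
  V = \<Sum>\<^sub>i \<xi>\<^sub>i e_i\<^sup>T P e_i is a Lyapunov function. With f_i = B\<^sup>T e_i, the drift inequality for P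
  bounds the contribution of A by \<Sum>\<^sub>i \<xi>\<^sub>i |f_i|\<^sup>2 - eps \<Sum>\<^sub>i \<xi>\<^sub>i |e_i|\<^sup>2, while coupling and pinning
  contribute -c times a quadratic form of the weighted pinned Laplacian
  \<gamma> \<xi>\<^sub>1 E\<^sub>1\<^sub>1 - diag(\<xi>) L evaluated at the f_i. Irreducibility makes this form positive definite,
  hence bounded below by \<sigma> \<Sum>\<^sub>i |f_i|\<^sup>2, so once c \<sigma> \<ge> max \<xi>\<^sub>i the derivative of V is at most
  -2 eps \<Sum>\<^sub>i \<xi>\<^sub>i |e_i|\<^sup>2 \<le> -\<delta> V, and all errors decay exponentially. *)

section \<open>Laplacian-type matrices\<close>

lemma irreducible_matrixD:
  assumes "irreducible_matrix L" and "I \<noteq> {}" and "\<forall>i\<in>I. \<forall>j. j \<notin> I \<longrightarrow> L $ i $ j = 0"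
  shows "I = UNIV"
  using assms unfolding irreducible_matrix_def reducible_matrix_def by blast

lemma zero_row_sums_left_null_vector:
  fixes L :: "real^'m^'m"
  assumes "\<forall>i. (\<Sum>j\<in>UNIV. L $ i $ j) = 0"
  shows "\<exists>w. w \<noteq> 0 \<and> w v* L = 0"
proof -
  have "L *v (\<chi> i. 1) = (0 :: real^'m)"
    using assms by (simp add: matrix_vector_mult_def vec_eq_iff)
  moreover have "(\<chi> i. 1) \<noteq> (0 :: real^'m)"
    by (simp add: vec_eq_iff)
  ultimately have "\<not> invertible L"
    by (metis invertible_def matrix_vector_mul_assoc matrix_vector_mul_lid matrix_vector_mult_0_right)
  then have "\<not> invertible (transpose L)"
    by (metis transpose_invertible transpose_transpose)
  then show ?thesis
    by (metis invertible_left_inverse matrix_left_invertible_ker transpose_matrix_vector)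
qed

lemma metzler_zero_row_sums_diag_nonpos:
  fixes L :: "real^'m^'m"
  assumes "\<forall>i j. i \<noteq> j \<longrightarrow> L $ i $ j \<ge> 0" and "\<forall>i. (\<Sum>j\<in>UNIV. L $ i $ j) = 0"
  shows "L $ i $ i \<le> 0"
proof -
  have "L $ i $ i + (\<Sum>j\<in>UNIV - {i}. L $ i $ j) = 0"
    using assms(2) by (simp add: sum.remove[of UNIV i])
  moreover have "(\<Sum>j\<in>UNIV - {i}. L $ i $ j) \<ge> 0"
    using assms(1) by (intro sum_nonneg) auto
  ultimately show ?thesis by linarith
qed

lemma left_null_vector_abs:
  fixes L :: "real^'m^'m"
  assumes Loff: "\<forall>i j. i \<noteq> j \<longrightarrow> L $ i $ j \<ge> 0"
    and Lrow: "\<forall>i. (\<Sum>j\<in>UNIV. L $ i $ j) = 0"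
    and w: "w v* L = 0"
  shows "(\<chi> i. \<bar>w $ i\<bar>) v* L = 0"
proof -
  define r where "r j = (\<Sum>i\<in>UNIV. \<bar>w $ i\<bar> * L $ i $ j)" for j
  \<comment> \<open>Each r j is nonnegative by the triangle inequality in column j (as L j j \<le> 0),
     and the r j sum to 0 because the rows of L do.\<close>
  have "r j \<ge> 0" for j
  proof -
    have "0 = w $ j * L $ j $ j + (\<Sum>i\<in>UNIV - {j}. w $ i * L $ i $ j)"
      using w by (simp add: vec_eq_iff vector_matrix_mult_def sum.remove[of UNIV j])
    then have "(\<Sum>i\<in>UNIV - {j}. w $ i * L $ i $ j) = w $ j * - L $ j $ j"
      by simp
    then have "\<bar>w $ j\<bar> * - L $ j $ j = \<bar>\<Sum>i\<in>UNIV - {j}. w $ i * L $ i $ j\<bar>"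
      using metzler_zero_row_sums_diag_nonpos[OF Loff Lrow, of j] by (simp add: abs_mult)
    also have "\<dots> \<le> (\<Sum>i\<in>UNIV - {j}. \<bar>w $ i\<bar> * L $ i $ j)"
      using sum_abs[of "\<lambda>i. w $ i * L $ i $ j" "UNIV - {j}"] Loff by (simp add: abs_mult)
    finally show ?thesis
      unfolding r_def by (simp add: sum.remove[of UNIV j])
  qed
  moreover have "(\<Sum>j\<in>UNIV. r j) = 0"
    unfolding r_def using Lrow
    by (subst sum.swap) (simp flip: sum_distrib_left)
  ultimately have "r j = 0" for j
    using sum_nonneg_eq_0_iff[of UNIV r] by simp
  then show ?thesis
    by (simp add: r_def vec_eq_iff vector_matrix_mult_def)
qed

lemma nonneg_left_null_vector_pos:
  fixes L :: "real^'m^'m"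
  assumes Loff: "\<forall>i j. i \<noteq> j \<longrightarrow> L $ i $ j \<ge> 0"
    and Lirr: "irreducible_matrix L"
    and w: "w v* L = 0" and nonneg: "\<forall>i. w $ i \<ge> 0" and "w \<noteq> 0"
  shows "w $ i > 0"
proof -
  define I where "I = {i. w $ i > 0}"
  have "I \<noteq> {}"
    using \<open>w \<noteq> 0\<close> nonneg by (auto simp: I_def vec_eq_iff less_le)
  moreover have "L $ i $ j = 0" if "i \<in> I" "j \<notin> I" for i j
  proof -
    have "w $ j = 0" "i \<noteq> j"
      using that nonneg by (auto simp: I_def less_le)
    then have "(\<Sum>k\<in>UNIV - {j}. w $ k * L $ k $ j) = 0"
      using w by (simp add: vec_eq_iff vector_matrix_mult_def sum.remove[of UNIV j])
    then have "w $ i * L $ i $ j = 0"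
      using \<open>i \<noteq> j\<close> nonneg Loff by (subst (asm) sum_nonneg_eq_0_iff) auto
    then show ?thesis
      using that by (simp add: I_def)
  qed
  ultimately have "I = UNIV"
    using irreducible_matrixD[OF Lirr] by blast
  then show ?thesis
    unfolding I_def by blast
qed

lemma exists_pos_left_null_vector:
  fixes L :: "real^'m^'m"
  assumes Loff: "\<forall>i j. i \<noteq> j \<longrightarrow> L $ i $ j \<ge> 0"
    and Lrow: "\<forall>i. (\<Sum>j\<in>UNIV. L $ i $ j) = 0"
    and Lirr: "irreducible_matrix L"
  shows "\<exists>\<xi>. (\<forall>i. \<xi> $ i > 0) \<and> \<xi> v* L = 0"
proof -
  obtain w where "w \<noteq> 0" "w v* L = 0"
    using zero_row_sums_left_null_vector[OF Lrow] by blast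
  then have "(\<chi> i. \<bar>w $ i\<bar>) \<noteq> 0" "(\<chi> i. \<bar>w $ i\<bar>) v* L = 0"
    using left_null_vector_abs[OF Loff Lrow] by (auto simp: vec_eq_iff)
  then show ?thesis
    using nonneg_left_null_vector_pos[OF Loff Lirr] by force
qed

lemma weighted_laplacian_form:
  fixes L :: "real^'m^'m"
  assumes Lrow: "\<forall>i. (\<Sum>j\<in>UNIV. L $ i $ j) = 0" and \<xi>: "\<xi> v* L = 0"
  shows "(\<Sum>i\<in>UNIV. \<Sum>j\<in>UNIV. \<xi> $ i * L $ i $ j * y $ i * y $ j)
       = - (1/2) * (\<Sum>i\<in>UNIV. \<Sum>j\<in>UNIV. \<xi> $ i * L $ i $ j * (y $ i - y $ j)^2)"
proof -
  have "(\<Sum>i\<in>UNIV. \<Sum>j\<in>UNIV. \<xi> $ i * L $ i $ j * (y $ i)^2)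
      = (\<Sum>i\<in>UNIV. \<xi> $ i * (y $ i)^2 * (\<Sum>j\<in>UNIV. L $ i $ j))"
    by (simp add: sum_distrib_left sum_distrib_right mult_ac)
  then have rows: "(\<Sum>i\<in>UNIV. \<Sum>j\<in>UNIV. \<xi> $ i * L $ i $ j * (y $ i)^2) = 0"
    using Lrow by simp
  have "(\<Sum>i\<in>UNIV. \<Sum>j\<in>UNIV. \<xi> $ i * L $ i $ j * (y $ j)^2)
      = (\<Sum>j\<in>UNIV. (y $ j)^2 * (\<Sum>i\<in>UNIV. \<xi> $ i * L $ i $ j))"
    by (subst sum.swap) (simp add: sum_distrib_left mult_ac)
  also have "\<dots> = 0"
    using \<xi> by (simp add: vec_eq_iff vector_matrix_mult_def)
  finally have columns: "(\<Sum>i\<in>UNIV. \<Sum>j\<in>UNIV. \<xi> $ i * L $ i $ j * (y $ j)^2) = 0" .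
  have "(\<Sum>i\<in>UNIV. \<Sum>j\<in>UNIV. \<xi> $ i * L $ i $ j * (y $ i - y $ j)^2)
      = (\<Sum>i\<in>UNIV. \<Sum>j\<in>UNIV. \<xi> $ i * L $ i $ j * (y $ i)^2)
        + (\<Sum>i\<in>UNIV. \<Sum>j\<in>UNIV. \<xi> $ i * L $ i $ j * (y $ j)^2)
        - 2 * (\<Sum>i\<in>UNIV. \<Sum>j\<in>UNIV. \<xi> $ i * L $ i $ j * y $ i * y $ j)"
    by (simp add: sum_distrib_left sum_subtractf sum.distrib power2_diff algebra_simps)
  then show ?thesis
    using rows columns by simp
qed

definition weighted_pinned_laplacian :: "real^'m \<Rightarrow> real^'m^'m \<Rightarrow> real \<Rightarrow> 'm \<Rightarrow> real^'m^'m" where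
  "weighted_pinned_laplacian \<xi> L \<gamma> k =
     (\<chi> i j. (if i = k \<and> j = k then \<gamma> * \<xi> $ k else 0) - \<xi> $ i * L $ i $ j)"

lemma weighted_pinned_laplacian_form:
  "y \<bullet> (weighted_pinned_laplacian \<xi> L \<gamma> k *v y)
     = \<gamma> * \<xi> $ k * (y $ k)^2 - (\<Sum>i\<in>UNIV. \<Sum>j\<in>UNIV. \<xi> $ i * L $ i $ j * y $ i * y $ j)"
proof -
  have pin: "(\<Sum>j\<in>UNIV. y $ i * y $ j * (if i = k \<and> j = k then \<gamma> * \<xi> $ k else 0))
      = (if i = k then \<gamma> * \<xi> $ k * (y $ k)^2 else 0)" for i
    by (cases "i = k") (simp_all add: power2_eq_square if_distrib[of "times _"] cong: if_cong)
  have "y \<bullet> (weighted_pinned_laplacian \<xi> L \<gamma> k *v y)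
      = (\<Sum>i\<in>UNIV. \<Sum>j\<in>UNIV. y $ i * y $ j * (if i = k \<and> j = k then \<gamma> * \<xi> $ k else 0))
        - (\<Sum>i\<in>UNIV. \<Sum>j\<in>UNIV. \<xi> $ i * L $ i $ j * y $ i * y $ j)"
    by (simp add: weighted_pinned_laplacian_def inner_vec_def matrix_vector_mult_def
        right_diff_distrib sum_subtractf sum_distrib_left mult_ac)
  then show ?thesis
    unfolding pin by simp
qed

lemma weighted_pinned_laplacian_pos:
  fixes L :: "real^'m^'m"
  assumes Loff: "\<forall>i j. i \<noteq> j \<longrightarrow> L $ i $ j \<ge> 0"
    and Lrow: "\<forall>i. (\<Sum>j\<in>UNIV. L $ i $ j) = 0"
    and Lirr: "irreducible_matrix L"
    and \<xi>_pos: "\<forall>i. \<xi> $ i > 0" and \<xi>: "\<xi> v* L = 0"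
    and "\<gamma> > 0" and "y \<noteq> 0"
  shows "y \<bullet> (weighted_pinned_laplacian \<xi> L \<gamma> k *v y) > 0"
proof (rule ccontr)
  define t where "t i j = \<xi> $ i * L $ i $ j * (y $ i - y $ j)^2" for i j
  have t_nonneg: "t i j \<ge> 0" for i j
    using Loff \<xi>_pos by (cases "i = j") (auto simp: t_def less_imp_le)
  assume "\<not> ?thesis"
  then have "\<gamma> * \<xi> $ k * (y $ k)^2 + (1/2) * (\<Sum>i\<in>UNIV. \<Sum>j\<in>UNIV. t i j) \<le> 0"
    by (simp add: weighted_pinned_laplacian_form weighted_laplacian_form[OF Lrow \<xi>] t_def)
  moreover have "\<gamma> * \<xi> $ k * (y $ k)^2 \<ge> 0" "(\<Sum>i\<in>UNIV. \<Sum>j\<in>UNIV. t i j) \<ge> 0"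
    using \<open>\<gamma> > 0\<close> \<xi>_pos[rule_format, of k] t_nonneg by (simp_all add: sum_nonneg)
  ultimately have "\<gamma> * \<xi> $ k * (y $ k)^2 = 0" and "(\<Sum>i\<in>UNIV. \<Sum>j\<in>UNIV. t i j) = 0"
    by linarith+
  then have yk: "y $ k = 0" and t0: "t i j = 0" for i j
    using \<open>\<gamma> > 0\<close> \<xi>_pos[rule_format, of k] t_nonneg
    by (simp_all add: sum_nonneg_eq_0_iff sum_nonneg)
  define I where "I = {i. y $ i \<noteq> 0}"
  have "L $ i $ j = 0" if "i \<in> I" "j \<notin> I" for i j
    using t0[of i j] that \<xi>_pos[rule_format, of i] by (auto simp: t_def I_def)
  moreover have "I \<noteq> {}"
    using \<open>y \<noteq> 0\<close> by (auto simp: I_def vec_eq_iff)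
  ultimately have "I = UNIV"
    using irreducible_matrixD[OF Lirr] by blast
  then show False
    using yk by (auto simp: I_def)
qed


section \<open>Quadratic forms\<close>

lemma quadratic_form_lower_bound:
  fixes M :: "real^'n^'n"
  assumes pos: "\<forall>y. y \<noteq> 0 \<longrightarrow> y \<bullet> (M *v y) > 0"
  shows "\<exists>\<sigma>>0. \<forall>y. \<sigma> * (y \<bullet> y) \<le> y \<bullet> (M *v y)"
proof -
  let ?q = "\<lambda>y. y \<bullet> (M *v y)"
  have "continuous_on (sphere 0 1) ?q"
    by (intro continuous_intros linear_continuous_on matrix_vector_mul_bounded_linear)
  moreover have "sphere (0 :: real^'n) 1 \<noteq> {}"
    using norm_axis_1 by (metis dist_0_norm mem_sphere empty_iff)
  ultimately obtain u where u: "u \<in> sphere 0 1" and min: "\<forall>y\<in>sphere 0 1. ?q u \<le> ?q y"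
    using continuous_attains_inf[OF compact_sphere] by blast
  have "?q u * (y \<bullet> y) \<le> ?q y" for y
  proof (cases "y = 0")
    case False
    have "(1 / norm y) *\<^sub>R y \<in> sphere 0 1"
      using False by simp
    then have "?q u \<le> ?q ((1 / norm y) *\<^sub>R y)"
      using min by blast
    also have "\<dots> = ?q y / (y \<bullet> y)"
      by (simp add: matrix_vector_mult_scaleR power2_norm_eq_inner[symmetric] power2_eq_square)
    finally show ?thesis
      using False by (simp add: field_simps)
  qed simp
  moreover have "?q u > 0"
    using pos u by (metis mem_sphere_0 norm_zero zero_neq_one)
  ultimately show ?thesis
    by blast
qed

lemma quadratic_form_upper_bound:
  fixes M :: "real^'n^'n"
  shows "\<exists>K>0. \<forall>y. y \<bullet> (M *v y) \<le> K * (y \<bullet> y)"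
proof -
  obtain K where "K > 0" and K: "\<forall>y. norm (M *v y) \<le> norm y * K"
    using bounded_linear.pos_bounded[OF matrix_vector_mul_bounded_linear] by blast
  have "y \<bullet> (M *v y) \<le> K * (y \<bullet> y)" for y
  proof -
    have "y \<bullet> (M *v y) \<le> norm y * norm (M *v y)"
      by (rule norm_cauchy_schwarz)
    also have "\<dots> \<le> norm y * (norm y * K)"
      using K by (simp add: mult_left_mono)
    finally show ?thesis
      by (simp add: power2_norm_eq_inner[symmetric] power2_eq_square mult_ac)
  qed
  then show ?thesis
    using \<open>K > 0\<close> by blast
qed

lemma quadratic_form_lower_bound_lift:
  fixes M :: "real^'m^'m" and f :: "'m \<Rightarrow> 'a::euclidean_space"
  assumes bound: "\<forall>y. \<sigma> * (y \<bullet> y) \<le> y \<bullet> (M *v y)"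
  shows "\<sigma> * (\<Sum>i\<in>UNIV. f i \<bullet> f i) \<le> (\<Sum>i\<in>UNIV. \<Sum>j\<in>UNIV. M $ i $ j * (f i \<bullet> f j))"
proof -
  define y where "y b = (\<chi> i. f i \<bullet> b)" for b
  have f_inner: "f i \<bullet> f j = (\<Sum>b\<in>Basis. y b $ i * y b $ j)" for i j
    unfolding y_def by (simp add: euclidean_inner[of "f i" "f j"])
  have "\<sigma> * (\<Sum>i\<in>UNIV. f i \<bullet> f i) = \<sigma> * (\<Sum>b\<in>Basis. y b \<bullet> y b)"
    unfolding f_inner inner_vec_def by (subst sum.swap) simp
  also have "\<dots> \<le> (\<Sum>b\<in>Basis. y b \<bullet> (M *v y b))"
    unfolding sum_distrib_left using bound by (intro sum_mono) blast
  also have "\<dots> = (\<Sum>b\<in>Basis. \<Sum>i\<in>UNIV. \<Sum>j\<in>UNIV. M $ i $ j * (y b $ i * y b $ j))"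
    by (simp add: inner_vec_def matrix_vector_mult_def sum_distrib_left mult_ac)
  also have "\<dots> = (\<Sum>i\<in>UNIV. \<Sum>j\<in>UNIV. \<Sum>b\<in>Basis. M $ i $ j * (y b $ i * y b $ j))"
    by (subst sum.swap, rule sum.cong[OF refl], rule sum.swap)
  also have "\<dots> = (\<Sum>i\<in>UNIV. \<Sum>j\<in>UNIV. M $ i $ j * (f i \<bullet> f j))"
    by (simp add: f_inner sum_distrib_left)
  finally show ?thesis .
qed

lemma pos_def_matrix_invertible:
  assumes "pos_def_matrix P"
  shows "invertible P"
proof -
  have "\<forall>x. P *v x = 0 \<longrightarrow> x = 0"
    using assms unfolding pos_def_matrix_def by (metis inner_zero_right less_irrefl)
  then show ?thesis
    by (simp add: invertible_left_inverse matrix_left_invertible_ker)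
qed

lemma matrix_inv_right:
  assumes "invertible A"
  shows "A ** matrix_inv A = mat 1"
  using assms unfolding invertible_def matrix_inv_def
  by (rule someI_ex[where P = "\<lambda>A'. A ** A' = mat 1 \<and> A' ** A = mat 1", THEN conjunct1])

lemma gramian_form:
  fixes P K :: "real^'n^'n" and B :: "real^'p^'n"
  assumes "P ** K = B ** transpose B"
  shows "u \<bullet> (P *v (K *v z)) = (transpose B *v u) \<bullet> (transpose B *v z)"
proof -
  have "P *v (K *v z) = B *v (transpose B *v z)"
    by (metis assms matrix_vector_mul_assoc)
  then show ?thesis
    by (simp flip: dot_lmul_matrix)
qed

lemma pos_def_form_dominates_gramian_form:
  fixes P :: "real^'n^'n" and B :: "real^'p^'n"
  assumes "pos_def_matrix P"
  shows "\<exists>\<gamma>>0. \<forall>z. \<gamma> * ((transpose B *v z) \<bullet> (transpose B *v z)) \<le> z \<bullet> (P *v z)"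
proof -
  obtain p where "p > 0" and P_lower: "\<forall>z. p * (z \<bullet> z) \<le> z \<bullet> (P *v z)"
    using quadratic_form_lower_bound assms unfolding pos_def_matrix_def by blast
  obtain \<beta> where "\<beta> > 0" and BB_upper: "\<forall>z. z \<bullet> ((B ** transpose B) *v z) \<le> \<beta> * (z \<bullet> z)"
    using quadratic_form_upper_bound by blast
  have "p / \<beta> * ((transpose B *v z) \<bullet> (transpose B *v z)) \<le> z \<bullet> (P *v z)" for z
  proof -
    have "(transpose B *v z) \<bullet> (transpose B *v z) \<le> \<beta> * (z \<bullet> z)"
      using BB_upper[rule_format, of z] by (simp add: dot_lmul_matrix flip: matrix_vector_mul_assoc)
    then have "p / \<beta> * ((transpose B *v z) \<bullet> (transpose B *v z)) \<le> p * (z \<bullet> z)"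
      using \<open>p > 0\<close> \<open>\<beta> > 0\<close> by (simp add: field_simps)
    then show ?thesis
      using P_lower by (meson order.trans)
  qed
  moreover have "p / \<beta> > 0"
    using \<open>p > 0\<close> \<open>\<beta> > 0\<close> by simp
  ultimately show ?thesis
    by blast
qed

lemma has_vector_derivative_quadratic_form:
  fixes P :: "real^'n^'n"
  assumes g: "(g has_vector_derivative g') (at t within S)" and P: "transpose P = P"
  shows "((\<lambda>t. g t \<bullet> (P *v g t)) has_vector_derivative 2 * (g t \<bullet> (P *v g'))) (at t within S)"
proof -
  have "((\<lambda>t. g t \<bullet> (P *v g t)) has_vector_derivative g t \<bullet> (P *v g') + g' \<bullet> (P *v g t)) (at t within S)"
    by (intro bounded_bilinear.has_vector_derivative[OF bounded_bilinear_inner] g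
        bounded_linear.has_vector_derivative[OF matrix_vector_mul_bounded_linear])
  moreover have "g' \<bullet> (P *v g t) = g t \<bullet> (P *v g')"
    by (metis P dot_lmul_matrix inner_commute transpose_matrix_vector)
  ultimately show ?thesis
    by simp
qed


section \<open>Exponential decay from a Lyapunov inequality\<close>

lemma exp_decay_of_differential_inequality:
  fixes V V' :: "real \<Rightarrow> real"
  assumes der: "\<And>t. t \<ge> 0 \<Longrightarrow> (V has_real_derivative V' t) (at t within {0..})"
    and ineq: "\<And>t. t \<ge> 0 \<Longrightarrow> V' t \<le> - \<delta> * V t"
    and "T \<ge> 0"
  shows "V T \<le> V 0 * exp (- \<delta> * T)"
proof -
  define W where "W t = exp (\<delta> * t) * V t" for t
  define W' where "W' t = exp (\<delta> * t) * (\<delta> * V t + V' t)" for t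
  have "(W has_real_derivative W' t) (at t within {0..T})" if "t \<in> {0..T}" for t
    unfolding W_def W'_def using that
    by (auto intro!: derivative_eq_intros has_field_derivative_subset[OF der] simp: algebra_simps)
  moreover have W'_nonpos: "W' t \<le> 0" if "t \<ge> 0" for t
    using ineq[OF that] by (simp add: W'_def mult_nonneg_nonpos)
  ultimately obtain t where "t \<in> {0..T}" and "W T - W 0 = W' t * (T - 0)"
    using mvt_very_simple[OF \<open>T \<ge> 0\<close>, of W "\<lambda>t h. W' t * h"]
    by (force simp: has_field_derivative_def mult_commute_abs)
  then have "exp (\<delta> * T) * V T \<le> V 0"
    using mult_nonpos_nonneg[OF W'_nonpos \<open>T \<ge> 0\<close>, of t] by (simp add: W_def)
  then show ?thesis
    by (simp add: exp_minus field_simps)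
qed

lemma tendsto_zero_of_exp_bound:
  fixes g :: "real \<Rightarrow> 'a::real_normed_vector"
  assumes bound: "\<And>t. t \<ge> 0 \<Longrightarrow> (norm (g t))^2 \<le> C * exp (- \<delta> * t)" and "\<delta> > 0"
  shows "(g \<longlongrightarrow> 0) at_top"
proof -
  have "((\<lambda>t. exp (- \<delta> * t)) \<longlongrightarrow> 0) at_top"
    using \<open>\<delta> > 0\<close>
    by (intro filterlim_compose[OF exp_at_bot] filterlim_tendsto_neg_mult_at_bot[OF tendsto_const]
        filterlim_ident) auto
  then have lim: "((\<lambda>t. sqrt (C * exp (- \<delta> * t))) \<longlongrightarrow> 0) at_top"
    using tendsto_real_sqrt[OF tendsto_mult_right_zero] by fastforce
  have "\<forall>\<^sub>F t in at_top. norm (g t) \<le> sqrt (C * exp (- \<delta> * t))"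
    using bound by (auto simp: eventually_at_top_linorder intro!: exI[of _ 0] real_le_rsqrt)
  then have "((\<lambda>t. norm (g t)) \<longlongrightarrow> 0) at_top"
    by (intro tendsto_sandwich[OF always_eventually _ tendsto_const lim]) simp_all
  then show ?thesis
    by (simp add: tendsto_norm_zero_iff)
qed

lemma weighted_lyapunov_exp_decay:
  fixes P :: "real^'n^'n" and \<xi> :: "real^'m"
    and e :: "real \<Rightarrow> 'm \<Rightarrow> real^'n" and F :: "('m \<Rightarrow> real^'n) \<Rightarrow> 'm \<Rightarrow> real^'n"
  defines "V \<equiv> \<lambda>t. \<Sum>i\<in>UNIV. \<xi> $ i * (e t i \<bullet> (P *v e t i))"
  assumes P: "transpose P = P" and \<xi>_nonneg: "\<forall>i. \<xi> $ i \<ge> 0" and "\<mu> > 0"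
    and der: "\<forall>t\<ge>0. \<forall>i. ((\<lambda>\<tau>. e \<tau> i) has_vector_derivative F (e t) i) (at t within {0..})"
    and diss: "\<forall>E. (\<Sum>i\<in>UNIV. \<xi> $ i * (E i \<bullet> (P *v F E i))) \<le> - \<mu> * (\<Sum>i\<in>UNIV. \<xi> $ i * (E i \<bullet> E i))"
  shows "\<exists>\<delta>>0. \<forall>t\<ge>0. V t \<le> V 0 * exp (- \<delta> * t)"
proof -
  obtain K where "K > 0" and P_upper: "\<forall>z. z \<bullet> (P *v z) \<le> K * (z \<bullet> z)"
    using quadratic_form_upper_bound by blast
  define \<delta> where "\<delta> = 2 * \<mu> / K"
  have dV: "(V has_real_derivative 2 * (\<Sum>i\<in>UNIV. \<xi> $ i * (e t i \<bullet> (P *v F (e t) i)))) (at t within {0..})"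
    if "t \<ge> 0" for t
    using der that P unfolding V_def has_real_derivative_iff_has_vector_derivative
    by (auto simp: sum_distrib_left mult.left_commute
        intro!: has_vector_derivative_sum has_vector_derivative_mult_right has_vector_derivative_quadratic_form)
  have dV_bound: "2 * (\<Sum>i\<in>UNIV. \<xi> $ i * (e t i \<bullet> (P *v F (e t) i))) \<le> - \<delta> * V t" for t
  proof -
    let ?S = "\<Sum>i\<in>UNIV. \<xi> $ i * (e t i \<bullet> e t i)"
    have "V t \<le> K * ?S"
      unfolding V_def sum_distrib_left
      by (intro sum_mono) (metis P_upper \<xi>_nonneg mult.left_commute mult_left_mono)
    have "K * (\<Sum>i\<in>UNIV. \<xi> $ i * (e t i \<bullet> (P *v F (e t) i))) \<le> K * (- \<mu> * ?S)"
      by (rule mult_left_mono) (use diss \<open>K > 0\<close> in auto)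
    also have "\<dots> \<le> - \<mu> * V t"
      using \<open>V t \<le> K * ?S\<close> \<open>\<mu> > 0\<close> by simp
    finally show ?thesis
      using \<open>K > 0\<close> by (simp add: \<delta>_def field_simps)
  qed
  have "\<delta> > 0"
    using \<open>\<mu> > 0\<close> \<open>K > 0\<close> by (simp add: \<delta>_def)
  then show ?thesis
    using exp_decay_of_differential_inequality[OF dV dV_bound] by blast
qed

lemma weighted_lyapunov_convergence:
  fixes P :: "real^'n^'n" and \<xi> :: "real^'m"
    and e :: "real \<Rightarrow> 'm \<Rightarrow> real^'n" and F :: "('m \<Rightarrow> real^'n) \<Rightarrow> 'm \<Rightarrow> real^'n"
  assumes P: "pos_def_matrix P" and \<xi>_pos: "\<forall>i. \<xi> $ i > 0" and "\<mu> > 0"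
    and der: "\<forall>t\<ge>0. \<forall>i. ((\<lambda>\<tau>. e \<tau> i) has_vector_derivative F (e t) i) (at t within {0..})"
    and diss: "\<forall>E. (\<Sum>i\<in>UNIV. \<xi> $ i * (E i \<bullet> (P *v F E i))) \<le> - \<mu> * (\<Sum>i\<in>UNIV. \<xi> $ i * (E i \<bullet> E i))"
  shows "((\<lambda>t. e t i) \<longlongrightarrow> 0) at_top"
proof -
  define V where "V t = (\<Sum>i\<in>UNIV. \<xi> $ i * (e t i \<bullet> (P *v e t i)))" for t
  have "transpose P = P" "\<forall>i. \<xi> $ i \<ge> 0"
    using P \<xi>_pos unfolding pos_def_matrix_def by (auto intro: less_imp_le)
  then obtain \<delta> where "\<delta> > 0" and decay: "\<forall>t\<ge>0. V t \<le> V 0 * exp (- \<delta> * t)"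
    using weighted_lyapunov_exp_decay[OF _ _ \<open>\<mu> > 0\<close> der diss] unfolding V_def by blast
  obtain p where "p > 0" and P_lower: "\<forall>z. p * (z \<bullet> z) \<le> z \<bullet> (P *v z)"
    using quadratic_form_lower_bound P unfolding pos_def_matrix_def by blast
  have P_nonneg: "0 \<le> z \<bullet> (P *v z)" for z
    using P_lower \<open>p > 0\<close> by (meson inner_ge_zero mult_nonneg_nonneg less_imp_le order.trans)
  have V_lower: "\<xi> $ i * p * (norm (e t i))^2 \<le> V t" for t
  proof -
    have "\<xi> $ i * p * (norm (e t i))^2 \<le> \<xi> $ i * (e t i \<bullet> (P *v e t i))"
      using P_lower \<xi>_pos by (simp add: power2_norm_eq_inner mult.assoc less_imp_le)
    also have "\<dots> \<le> V t"
      unfolding V_def using P_nonneg \<xi>_pos by (intro member_le_sum) (auto intro: mult_nonneg_nonneg less_imp_le)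
    finally show ?thesis .
  qed
  have e_bound: "(norm (e t i))^2 \<le> V 0 / (\<xi> $ i * p) * exp (- \<delta> * t)" if "t \<ge> 0" for t
  proof -
    have "\<xi> $ i * p * (norm (e t i))^2 \<le> V 0 * exp (- \<delta> * t)"
      using V_lower[of t] decay[rule_format, OF that] by (rule order.trans)
    then show ?thesis
      using \<xi>_pos \<open>p > 0\<close> by (simp add: field_simps)
  qed
  show ?thesis
    by (rule tendsto_zero_of_exp_bound[OF e_bound \<open>\<delta> > 0\<close>])
qed


section \<open>The pinned consensus system\<close>

definition pinned_consensus_field ::
    "real^'n^'n \<Rightarrow> real^'n^'n \<Rightarrow> real^'m^'m \<Rightarrow> real \<Rightarrow> real \<Rightarrow> 'm \<Rightarrow> ('m \<Rightarrow> real^'n) \<Rightarrow> 'm \<Rightarrow> real^'n"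
  where
  "pinned_consensus_field A K L c \<kappa> k E i =
     A *v E i + c *\<^sub>R (\<Sum>j\<in>UNIV. L $ i $ j *\<^sub>R (K *v E j)) - (if i = k then \<kappa> *\<^sub>R E i else 0)"

lemma pinned_consensus_error_dynamics:
  fixes L :: "real^'m^'m"
  assumes Lrow: "\<forall>i. (\<Sum>j\<in>UNIV. L $ i $ j) = 0"
    and s: "(s has_vector_derivative A *v s t) (at t within S)"
    and x: "((\<lambda>\<tau>. x \<tau> i) has_vector_derivative
              A *v x t i + c *\<^sub>R (\<Sum>j\<in>UNIV. L $ i $ j *\<^sub>R (K *v x t j))
              - (if i = k then \<kappa> *\<^sub>R (x t i - s t) else 0)) (at t within S)"
  shows "((\<lambda>\<tau>. x \<tau> i - s \<tau>) has_vector_derivative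
           pinned_consensus_field A K L c \<kappa> k (\<lambda>j. x t j - s t) i) (at t within S)"
proof -
  have "(\<Sum>j\<in>UNIV. L $ i $ j *\<^sub>R (K *v (x t j - s t)))
      = (\<Sum>j\<in>UNIV. L $ i $ j *\<^sub>R (K *v x t j)) - (\<Sum>j\<in>UNIV. L $ i $ j) *\<^sub>R (K *v s t)"
    by (simp add: matrix_vector_mult_diff_distrib scaleR_diff_right sum_subtractf scaleR_sum_left)
  then have "pinned_consensus_field A K L c \<kappa> k (\<lambda>j. x t j - s t) i
      = (A *v x t i + c *\<^sub>R (\<Sum>j\<in>UNIV. L $ i $ j *\<^sub>R (K *v x t j))
         - (if i = k then \<kappa> *\<^sub>R (x t i - s t) else 0)) - A *v s t"
    using Lrow by (simp add: pinned_consensus_field_def matrix_vector_mult_diff_distrib algebra_simps)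
  then show ?thesis
    using has_vector_derivative_diff[OF x s] by simp
qed

lemma pinned_consensus_tracking:
  fixes A P K :: "real^'n^'n" and L :: "real^'m^'m" and \<xi> :: "real^'m"
    and s :: "real \<Rightarrow> real^'n" and x :: "real \<Rightarrow> 'm \<Rightarrow> real^'n"
  assumes P: "pos_def_matrix P" and \<xi>_pos: "\<forall>i. \<xi> $ i > 0" and "eps > 0"
    and Lrow: "\<forall>i. (\<Sum>j\<in>UNIV. L $ i $ j) = 0"
    and diss: "\<forall>E. (\<Sum>i\<in>UNIV. \<xi> $ i * (E i \<bullet> (P *v pinned_consensus_field A K L c \<kappa> k E i)))
                  \<le> - eps * (\<Sum>i\<in>UNIV. \<xi> $ i * (E i \<bullet> E i))"
    and s: "\<forall>t\<ge>0. (s has_vector_derivative A *v s t) (at t within {0..})"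
    and x: "\<forall>t\<ge>0. \<forall>i. ((\<lambda>\<tau>. x \<tau> i) has_vector_derivative
              A *v x t i + c *\<^sub>R (\<Sum>j\<in>UNIV. L $ i $ j *\<^sub>R (K *v x t j))
              - (if i = k then \<kappa> *\<^sub>R (x t i - s t) else 0)) (at t within {0..})"
  shows "((\<lambda>t. x t i - s t) \<longlongrightarrow> 0) at_top"
proof -
  let ?F = "pinned_consensus_field A K L c \<kappa> k"
  have "\<forall>t\<ge>0. \<forall>i. ((\<lambda>\<tau>. x \<tau> i - s \<tau>) has_vector_derivative ?F (\<lambda>j. x t j - s t) i) (at t within {0..})"
    using pinned_consensus_error_dynamics[OF Lrow] s x by blast
  then show ?thesis
    using weighted_lyapunov_convergence[OF P \<xi>_pos \<open>eps > 0\<close>, where e = "\<lambda>t i. x t i - s t" and F = ?F] diss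
    by blast
qed

lemma pinned_consensus_field_agent_bound:
  fixes A P K :: "real^'n^'n" and B :: "real^'p^'n" and L :: "real^'m^'m" and E :: "'m \<Rightarrow> real^'n"
    and \<xi> :: "real^'m" and \<epsilon> \<gamma> :: real and k :: 'm
  defines "f \<equiv> \<lambda>i. transpose B *v E i"
    and "H \<equiv> weighted_pinned_laplacian \<xi> L (\<epsilon> * \<gamma>) k"
  assumes PK: "P ** K = B ** transpose B"
    and drift: "\<forall>z. z \<bullet> (P *v (A *v z - K *v z)) \<le> - eps * (z \<bullet> z)"
    and pin: "\<forall>z. \<gamma> * ((transpose B *v z) \<bullet> (transpose B *v z)) \<le> z \<bullet> (P *v z)"
    and "\<xi> $ i > 0" and "c \<ge> 0" and "\<epsilon> \<ge> 0"
  shows "\<xi> $ i * (E i \<bullet> (P *v pinned_consensus_field A K L c (c * \<epsilon>) k E i))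
         \<le> \<xi> $ i * (f i \<bullet> f i) - eps * (\<xi> $ i * (E i \<bullet> E i)) - c * (\<Sum>j\<in>UNIV. H $ i $ j * (f i \<bullet> f j))"
proof -
  let ?C = "\<Sum>j\<in>UNIV. L $ i $ j * (f i \<bullet> f j)"
  have coupling: "E i \<bullet> (P *v (\<Sum>j\<in>UNIV. L $ i $ j *\<^sub>R (K *v E j))) = ?C"
    by (simp add: f_def linear_sum[OF matrix_vector_mul_linear] o_def matrix_vector_mult_scaleR
        inner_sum_right gramian_form[OF PK])
  have "E i \<bullet> (P *v (A *v E i)) \<le> f i \<bullet> f i - eps * (E i \<bullet> E i)"
    using drift[rule_format, of "E i"]
    by (simp add: f_def matrix_vector_mult_diff_distrib inner_diff_right gramian_form[OF PK])
  then have drift_i: "\<xi> $ i * (E i \<bullet> (P *v (A *v E i))) \<le> \<xi> $ i * (f i \<bullet> f i - eps * (E i \<bullet> E i))"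
    using \<open>\<xi> $ i > 0\<close> by (simp add: mult_left_mono)
  have expand: "E i \<bullet> (P *v pinned_consensus_field A K L c (c * \<epsilon>) k E i)
      = E i \<bullet> (P *v (A *v E i)) + c * ?C - (if i = k then c * \<epsilon> * (E i \<bullet> (P *v E i)) else 0)"
    by (simp add: pinned_consensus_field_def coupling inner_diff_right inner_add_right
        matrix_vector_right_distrib matrix_vector_mult_diff_distrib matrix_vector_mult_scaleR)
  have pin_i: "c * \<xi> $ i * (\<epsilon> * \<gamma> * (f i \<bullet> f i)) \<le> c * \<xi> $ i * (\<epsilon> * (E i \<bullet> (P *v E i)))"
    using pin[rule_format, of "E i"] \<open>\<xi> $ i > 0\<close> \<open>c \<ge> 0\<close> \<open>\<epsilon> \<ge> 0\<close>
    by (simp add: f_def mult_left_mono mult.assoc)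
  have H_row: "(\<Sum>j\<in>UNIV. H $ i $ j * (f i \<bullet> f j))
      = (if i = k then \<epsilon> * \<gamma> * \<xi> $ k * (f k \<bullet> f k) else 0) - \<xi> $ i * ?C"
  proof -
    have "(\<Sum>j\<in>UNIV. (if i = k \<and> j = k then \<epsilon> * \<gamma> * \<xi> $ k else 0) * (f i \<bullet> f j))
        = (if i = k then \<epsilon> * \<gamma> * \<xi> $ k * (f k \<bullet> f k) else 0)"
      by (cases "i = k") (simp_all add: if_distrib[of "\<lambda>x. x * _"] cong: if_cong)
    then show ?thesis
      by (simp add: H_def weighted_pinned_laplacian_def left_diff_distrib sum_subtractf
          sum_distrib_left mult.assoc)
  qed
  show ?thesis
    unfolding expand H_row using drift_i pin_i by (cases "i = k") (simp_all add: algebra_simps)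
qed

lemma pinned_consensus_field_dissipative:
  fixes A P K :: "real^'n^'n" and B :: "real^'p^'n" and L :: "real^'m^'m" and E :: "'m \<Rightarrow> real^'n"
    and \<xi> :: "real^'m" and \<epsilon> \<gamma> :: real and k :: 'm
  assumes PK: "P ** K = B ** transpose B"
    and drift: "\<forall>z. z \<bullet> (P *v (A *v z - K *v z)) \<le> - eps * (z \<bullet> z)"
    and pin: "\<forall>z. \<gamma> * ((transpose B *v z) \<bullet> (transpose B *v z)) \<le> z \<bullet> (P *v z)"
    and \<xi>_pos: "\<forall>i. \<xi> $ i > 0"
    and H: "\<forall>y. \<sigma> * (y \<bullet> y) \<le> y \<bullet> (weighted_pinned_laplacian \<xi> L (\<epsilon> * \<gamma>) k *v y)"
    and c_large: "\<forall>i. \<xi> $ i \<le> c * \<sigma>" and "c \<ge> 0" and "\<epsilon> \<ge> 0"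
  shows "(\<Sum>i\<in>UNIV. \<xi> $ i * (E i \<bullet> (P *v pinned_consensus_field A K L c (c * \<epsilon>) k E i)))
         \<le> - eps * (\<Sum>i\<in>UNIV. \<xi> $ i * (E i \<bullet> E i))"
proof -
  define f where "f i = transpose B *v E i" for i
  let ?H = "weighted_pinned_laplacian \<xi> L (\<epsilon> * \<gamma>) k"
  let ?F = "\<Sum>i\<in>UNIV. f i \<bullet> f i"
  have "(\<Sum>i\<in>UNIV. \<xi> $ i * (E i \<bullet> (P *v pinned_consensus_field A K L c (c * \<epsilon>) k E i)))
      \<le> (\<Sum>i\<in>UNIV. \<xi> $ i * (f i \<bullet> f i) - eps * (\<xi> $ i * (E i \<bullet> E i))
            - c * (\<Sum>j\<in>UNIV. ?H $ i $ j * (f i \<bullet> f j)))"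
    unfolding f_def
    by (intro sum_mono pinned_consensus_field_agent_bound[OF PK drift pin]) (use assms in auto)
  also have "\<dots> = (\<Sum>i\<in>UNIV. \<xi> $ i * (f i \<bullet> f i)) - eps * (\<Sum>i\<in>UNIV. \<xi> $ i * (E i \<bullet> E i))
      - c * (\<Sum>i\<in>UNIV. \<Sum>j\<in>UNIV. ?H $ i $ j * (f i \<bullet> f j))"
    by (simp add: sum_subtractf sum_distrib_left)
  also have "\<dots> \<le> c * \<sigma> * ?F - eps * (\<Sum>i\<in>UNIV. \<xi> $ i * (E i \<bullet> E i)) - c * (\<sigma> * ?F)"
  proof -
    have "(\<Sum>i\<in>UNIV. \<xi> $ i * (f i \<bullet> f i)) \<le> c * \<sigma> * ?F"
      unfolding sum_distrib_left using c_large by (intro sum_mono mult_right_mono) auto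
    moreover have "c * (\<sigma> * ?F) \<le> c * (\<Sum>i\<in>UNIV. \<Sum>j\<in>UNIV. ?H $ i $ j * (f i \<bullet> f j))"
      using quadratic_form_lower_bound_lift[OF H] \<open>c \<ge> 0\<close> by (rule mult_left_mono)
    ultimately show ?thesis
      by linarith
  qed
  finally show ?thesis
    by simp
qed

lemma pinned_consensus_threshold:
  fixes A P K :: "real^'n^'n" and B :: "real^'p^'n" and L :: "real^'m^'m"
    and \<xi> :: "real^'m" and \<epsilon> :: real and k :: 'm
  assumes P: "pos_def_matrix P" and PK: "P ** K = B ** transpose B"
    and drift: "\<forall>z. z \<bullet> (P *v (A *v z - K *v z)) \<le> - eps * (z \<bullet> z)"
    and Loff: "\<forall>i j. i \<noteq> j \<longrightarrow> L $ i $ j \<ge> 0"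
    and Lrow: "\<forall>i. (\<Sum>j\<in>UNIV. L $ i $ j) = 0"
    and Lirr: "irreducible_matrix L"
    and \<xi>_pos: "\<forall>i. \<xi> $ i > 0" and \<xi>: "\<xi> v* L = 0" and "\<epsilon> > 0"
  shows "\<exists>c0. \<forall>c>c0. \<forall>E. (\<Sum>i\<in>UNIV. \<xi> $ i * (E i \<bullet> (P *v pinned_consensus_field A K L c (c * \<epsilon>) k E i)))
                         \<le> - eps * (\<Sum>i\<in>UNIV. \<xi> $ i * (E i \<bullet> E i))"
proof -
  obtain \<gamma> where "\<gamma> > 0"
    and pin: "\<forall>z. \<gamma> * ((transpose B *v z) \<bullet> (transpose B *v z)) \<le> z \<bullet> (P *v z)"
    using pos_def_form_dominates_gramian_form[OF P] by blast
  have "\<forall>y. y \<noteq> 0 \<longrightarrow> y \<bullet> (weighted_pinned_laplacian \<xi> L (\<epsilon> * \<gamma>) k *v y) > 0"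
    using weighted_pinned_laplacian_pos[OF Loff Lrow Lirr \<xi>_pos \<xi>] \<open>\<epsilon> > 0\<close> \<open>\<gamma> > 0\<close> by simp
  then obtain \<sigma> where "\<sigma> > 0"
    and H: "\<forall>y. \<sigma> * (y \<bullet> y) \<le> y \<bullet> (weighted_pinned_laplacian \<xi> L (\<epsilon> * \<gamma>) k *v y)"
    using quadratic_form_lower_bound by blast
  have \<xi>_le_sum: "\<xi> $ i \<le> (\<Sum>i\<in>UNIV. \<xi> $ i)" for i
    using \<xi>_pos by (intro member_le_sum) (auto intro: less_imp_le)
  have "\<forall>i. \<xi> $ i \<le> c * \<sigma>" "c \<ge> 0" if "c > (\<Sum>i\<in>UNIV. \<xi> $ i) / \<sigma>" for c
  proof -
    have "(\<Sum>i\<in>UNIV. \<xi> $ i) \<le> c * \<sigma>"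
      using that \<open>\<sigma> > 0\<close> by (simp add: field_simps)
    then show "\<forall>i. \<xi> $ i \<le> c * \<sigma>"
      using \<xi>_le_sum order.trans by blast
    have "(\<Sum>i\<in>UNIV. \<xi> $ i) / \<sigma> \<ge> 0"
      using \<xi>_pos \<open>\<sigma> > 0\<close> by (simp add: sum_nonneg less_imp_le)
    then show "c \<ge> 0"
      using that by linarith
  qed
  then show ?thesis
    using pinned_consensus_field_dissipative[OF PK drift pin \<xi>_pos H] \<open>\<epsilon> > 0\<close> by force
qed

theorem proposition10:
  fixes A :: "real^'n^'n" and B :: "real^'p^'n" and P :: "real^'n^'n"
    and L :: "real^'m^'m" and eps varepsilon :: real and i1 :: 'm
  assumes ctrl: "controllable A B"
    and Ppd: "pos_def_matrix P"
    and eps_pos: "eps > 0"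
    and Pineq: "\<forall>x y. (x - y) \<bullet> (P *v (A *v (x - y) - (matrix_inv P ** B ** transpose B) *v (x - y)))
                    \<le> - eps * ((x - y) \<bullet> (x - y))"
    and Lirr: "irreducible_matrix L"
    and Lrank: "rank L = CARD('m) - 1"
    and Loff: "\<forall>i j. i \<noteq> j \<longrightarrow> L $ i $ j \<ge> 0"
    and Lrow: "\<forall>i. (\<Sum>j\<in>UNIV. L $ i $ j) = 0"
    and vareps_pos: "varepsilon > 0"
  shows "\<exists>c0. \<forall>c > c0. \<forall>(s :: real \<Rightarrow> real^'n) (x :: real \<Rightarrow> 'm \<Rightarrow> real^'n).
           (\<forall>t\<ge>0. (s has_vector_derivative (A *v s t)) (at t within {0..})) \<longrightarrow>
           (\<forall>t\<ge>0. \<forall>i. ((\<lambda>\<tau>. x \<tau> i) has_vector_derivative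
                 (A *v x t i
                  + c *\<^sub>R (\<Sum>j\<in>UNIV. L $ i $ j *\<^sub>R ((matrix_inv P ** B ** transpose B) *v x t j))
                  - (if i = i1 then (c * varepsilon) *\<^sub>R (x t i - s t) else 0)))
                 (at t within {0..})) \<longrightarrow>
           (\<forall>i. ((\<lambda>t. x t i - s t) \<longlongrightarrow> 0) at_top)"
proof -
  let ?K = "matrix_inv P ** B ** transpose B"
  have PK: "P ** ?K = B ** transpose B"
    using matrix_inv_right[OF pos_def_matrix_invertible[OF Ppd]] by (simp add: matrix_mul_assoc)
  have drift: "\<forall>z. z \<bullet> (P *v (A *v z - ?K *v z)) \<le> - eps * (z \<bullet> z)"
    using Pineq by (metis diff_zero)
  obtain \<xi> where \<xi>_pos: "\<forall>i. \<xi> $ i > 0" and \<xi>: "\<xi> v* L = 0"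
    using exists_pos_left_null_vector[OF Loff Lrow Lirr] by blast
  obtain c0 where c0: "\<forall>c>c0. \<forall>E. (\<Sum>i\<in>UNIV. \<xi> $ i * (E i \<bullet> (P *v pinned_consensus_field A ?K L c (c * varepsilon) i1 E i)))
                         \<le> - eps * (\<Sum>i\<in>UNIV. \<xi> $ i * (E i \<bullet> E i))"
    using pinned_consensus_threshold[OF Ppd PK drift Loff Lrow Lirr \<xi>_pos \<xi> vareps_pos] by blast
  show ?thesis
    by (intro exI[of _ c0] allI impI pinned_consensus_tracking[OF Ppd \<xi>_pos eps_pos Lrow])
      (use c0 in blast)+
qed

end
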